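(* Let $A$ be a complete filtered associative algebra over a field $\mathbb{K}$ of characteristic zero, and let $P:A\to A$ be a linear map preserving the filtration, i.e. $P(A_n)\subseteq A_n$ for all $n$. Put $\tilde P:=\mathrm{id}_A-P$. Then there exists a unique (in general non-linear) map $\chi:A_1\to A_1$ such that $(\chi-\mathrm{id}_A)(A_i)\subseteq A_{2i}$ for every $i\ge 1$ and $$\forall a\in A_1:\quad a=C\big(P(\chi(a)),\,\tilde P(\chi(a))\big).$$ Moreover $\chi$ is bijective, and its inverse is $$\chi^{-1}(a)=C\big(P(a),\tilde P(a)\big)=a+\mathrm{BCH}\big(P(a),\tilde P(a)\big),\qquad a\in A_1.$$
   Context: A complete filtered associative algebra is an associative $\mathbb{K}$-algebra $A$ with a decreasing filtration $A=A_0\supseteq A_1\supseteq A_2\supseteq\cdots$ by subalgebras such that $A_mA_n\subseteq A_{m+n}$ and $A\cong\varprojlim A/A_n$. On $A_1$ the maps $\exp:A_1\to 1+A_1$, $\exp(a)=\sum_{n\ge0}a^n/n!$, and $\log:1+A_1\to A_1$, $\log(1+a)=-\sum_{n\ge1}(-a)^n/n$, are mutually inverse bijections. $\mathrm{BCH}(x,y)$ denotes the Baker--Campbell--Hausdorff series, i.e. the element of the free complete algebra $\mathbb{Q}\langle\langle x,y\rangle\rangle$ with $\exp(x)\exp(y)=\exp(x+y+\mathrm{BCH}(x,y))$; it is a series of iterated commutators $[u,v]=uv-vu$ beginning $\tfrac12[x,y]+\tfrac1{12}[x,[x,y]]-\tfrac1{12}[y,[x,y]]+\cdots$. For $u,v\in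 A_1$ put $C(u,v):=u+v+\mathrm{BCH}(u,v)=\log(\exp(u)\exp(v))\in A_1$. *)

theory Defs
  imports Main
begin

definition flim :: "(nat \<Rightarrow> 'a::ab_group_add set) \<Rightarrow> (nat \<Rightarrow> 'a) \<Rightarrow> 'a \<Rightarrow> bool" where
  "flim F s x \<longleftrightarrow> (\<forall>N. \<exists>M. \<forall>n\<ge>M. s n - x \<in> F N)"

definition fseries :: "(nat \<Rightarrow> 'a::ab_group_add set) \<Rightarrow> (nat \<Rightarrow> 'a) \<Rightarrow> 'a" where
  "fseries F s = (THE x. flim F (\<lambda>n. \<Sum>k<n. s k) x)"

definition fexp :: "('k::field_char_0 \<Rightarrow> 'a::ring_1 \<Rightarrow> 'a) \<Rightarrow> (nat \<Rightarrow> 'a set) \<Rightarrow> 'a \<Rightarrow> 'a" where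
  "fexp scale F a = fseries F (\<lambda>k. scale (1 / fact k) (a ^ k))"

definition flog :: "('k::field_char_0 \<Rightarrow> 'a::ring_1 \<Rightarrow> 'a) \<Rightarrow> (nat \<Rightarrow> 'a set) \<Rightarrow> 'a \<Rightarrow> 'a" where
  "flog scale F y = fseries F
     (\<lambda>k. if k = 0 then 0 else - scale (1 / of_nat k) ((- (y - 1)) ^ k))"

text \<open>C(u,v) = log(exp u exp v) = u + v + BCH(u,v)\<close>
definition fC :: "('k::field_char_0 \<Rightarrow> 'a::ring_1 \<Rightarrow> 'a) \<Rightarrow> (nat \<Rightarrow> 'a set) \<Rightarrow> 'a \<Rightarrow> 'a \<Rightarrow> 'a" where
  "fC scale F u v = flog scale F (fexp scale F u * fexp scale F v)"

locale complete_filtered_algebra =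
  fixes scale :: "'k::field_char_0 \<Rightarrow> 'a::ring_1 \<Rightarrow> 'a"
    and F :: "nat \<Rightarrow> 'a set"
  assumes scale_right_distrib: "scale c (x + y) = scale c x + scale c y"
    and scale_left_distrib: "scale (c + d) x = scale c x + scale d x"
    and scale_scale: "scale c (scale d x) = scale (c * d) x"
    and scale_one: "scale 1 x = x"
    and scale_mult_left: "scale c (x * y) = scale c x * y"
    and scale_mult_right: "scale c (x * y) = x * scale c y"
    and F_0: "F 0 = UNIV"
    and F_decr: "F (Suc n) \<subseteq> F n"
    and F_zero: "0 \<in> F n"
    and F_add: "x \<in> F n \<Longrightarrow> y \<in> F n \<Longrightarrow> x + y \<in> F n"
    and F_scale: "x \<in> F n \<Longrightarrow> scale c x \<in> F n"
    and F_mult: "x \<in> F m \<Longrightarrow> y \<in> F n \<Longrightarrow> x * y \<in> F (m + n)"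
    and separated: "(\<forall>n. x \<in> F n) \<Longrightarrow> x = 0"
    and complete: "(\<forall>N. \<exists>M. \<forall>m\<ge>M. \<forall>n\<ge>M. s m - s n \<in> F N) \<Longrightarrow> \<exists>x. flim F s x"

end

theory Submission
  imports Defs
begin

text \<open>
  The map \<open>\<Phi> a = C(P a, a - P a)\<close> is the composite of
  \<open>a \<mapsto> (exp (P a) - 1, exp (a - P a) - 1)\<close>, of \<open>(x, y) \<mapsto> x + y + x y\<close> and of
  \<open>x \<mapsto> log (1 + x)\<close>. Since \<open>exp - 1\<close> and \<open>log (1 + _)\<close> are the identity plus a power
  series starting in degree 2, all these maps, and hence \<open>\<Phi>\<close>, are near the identity:
  \<open>\<Phi> - id\<close> maps \<open>A\<^sub>i\<close> into \<open>A\<^sub>2\<^sub>i\<close> and is a contraction for the filtration.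
  By completeness such a map is a bijection of \<open>A\<^sub>1\<close> (the equation \<open>\<Phi> b = c\<close> is solved
  by the fixed point iteration \<open>b \<mapsto> b + (c - \<Phi> b)\<close>), and its inverse again maps \<open>A\<^sub>i\<close>
  into \<open>a + A\<^sub>2\<^sub>i\<close>. So \<open>\<chi>\<close> is the inverse of \<open>\<Phi>\<close>, and it is unique because \<open>\<Phi>\<close> is injective.
\<close>

lemma the_inv_into_the_inv_into:
  assumes "bij_betw f A B" "a \<in> A"
  shows "the_inv_into B (the_inv_into A f) a = f a"
proof (rule the_inv_into_f_eq)
  show "inj_on (the_inv_into A f) B"
    using bij_betw_imp_inj_on[OF bij_betw_the_inv_into[OF assms(1)]] .
  show "the_inv_into A f (f a) = a"
    using the_inv_into_f_f[OF bij_betw_imp_inj_on[OF assms(1)] assms(2)] .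
  show "f a \<in> B"
    using bij_betwE[OF assms(1)] assms(2) by blast
qed

context complete_filtered_algebra
begin

lemma scale_zero_left [simp]: "scale 0 x = 0"
proof -
  have "scale 0 x = scale 0 x + scale 0 x"
    by (metis add_0 scale_left_distrib)
  then show ?thesis by simp
qed

lemma scale_minus_one: "scale (- 1) x = - x"
proof -
  have "scale (- 1) x + x = 0"
    by (metis scale_left_distrib scale_one scale_zero_left add.left_inverse)
  then show ?thesis by (simp add: eq_neg_iff_add_eq_0)
qed

lemma scale_minus_left: "scale (- c) x = - scale c x"
  by (metis scale_minus_one scale_scale mult_minus1)

lemma scale_diff_right: "scale c (x - y) = scale c x - scale c y"
  by (metis scale_right_distrib diff_add_cancel eq_diff_eq)

lemma F_uminus: "x \<in> F n \<Longrightarrow> - x \<in> F n"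
  by (metis F_scale scale_minus_one)

lemma F_diff: "x \<in> F n \<Longrightarrow> y \<in> F n \<Longrightarrow> x - y \<in> F n"
  by (metis F_add F_uminus diff_conv_add_uminus)

lemma F_diff_commute: "x - y \<in> F n \<longleftrightarrow> y - x \<in> F n"
  by (metis F_uminus minus_diff_eq)

lemma F_diff_trans: "x - y \<in> F n \<Longrightarrow> y - z \<in> F n \<Longrightarrow> x - z \<in> F n"
  using F_add[of "x - y" n "y - z"] by simp

lemma F_mono: "x \<in> F n \<Longrightarrow> m \<le> n \<Longrightarrow> x \<in> F m"
  by (induction n) (use F_decr le_Suc_eq in auto)

lemma F_eqI: "(\<And>N. x - y \<in> F N) \<Longrightarrow> x = y"
  using separated[of "x - y"] by simp

lemma F_sum: "(\<And>k. k \<in> A \<Longrightarrow> f k \<in> F n) \<Longrightarrow> sum f A \<in> F n"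
  by (induction A rule: infinite_finite_induct) (auto intro: F_zero F_add)

lemma F_power: "u \<in> F i \<Longrightarrow> u ^ k \<in> F (i * k)"
  by (induction k) (auto simp: F_0 intro: F_mult)

lemma F_power_diff:
  assumes "u \<in> F 1" "v \<in> F 1" "u - v \<in> F j"
  shows "u ^ Suc k - v ^ Suc k \<in> F (j + k)"
proof (induction k)
  case 0
  then show ?case using assms by simp
next
  case (Suc k)
  have "u * (u ^ Suc k - v ^ Suc k) + (u - v) * v ^ Suc k \<in> F (j + Suc k)"
    using F_mult[OF assms(1) Suc] F_mult[OF assms(3) F_power[OF assms(2), of "Suc k"]]
    by (auto intro: F_add)
  then show ?case by (simp add: algebra_simps)
qed

section \<open>Convergence in the filtration topology\<close>

lemma flim_iff_eventually:
  "flim F s x \<longleftrightarrow> (\<forall>N. eventually (\<lambda>n. s n - x \<in> F N) sequentially)"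
  by (simp add: flim_def eventually_sequentially)

lemma flim_unique:
  assumes "flim F s x" "flim F s y"
  shows "x = y"
proof (rule F_eqI)
  fix N
  have "eventually (\<lambda>n. s n - y \<in> F N \<and> s n - x \<in> F N) sequentially"
    using assms by (simp add: flim_iff_eventually eventually_conj)
  then obtain n where "s n - y \<in> F N" "s n - x \<in> F N"
    using eventually_happens' sequentially_bot by blast
  then show "x - y \<in> F N"
    using F_diff_trans[of x "s n"] F_diff_commute by blast
qed

lemma flim_closed:
  assumes "flim F s x" "\<And>n. s n \<in> F N"
  shows "x \<in> F N"
proof -
  obtain M where "s M - x \<in> F N"
    using assms(1) unfolding flim_def by blast
  then show ?thesis using F_diff[OF assms(2)[of M]] by fastforce
qed

lemma flim_diff:
  "flim F s x \<Longrightarrow> flim F t y \<Longrightarrow> flim F (\<lambda>n. s n - t n) (x - y)"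
  unfolding flim_iff_eventually
proof (intro allI)
  fix N
  assume "\<forall>N. eventually (\<lambda>n. s n - x \<in> F N) sequentially"
    and "\<forall>N. eventually (\<lambda>n. t n - y \<in> F N) sequentially"
  then have "eventually (\<lambda>n. s n - x \<in> F N) sequentially"
    "eventually (\<lambda>n. t n - y \<in> F N) sequentially" by blast+
  then have "eventually (\<lambda>n. (s n - x) - (t n - y) \<in> F N) sequentially"
    by (rule eventually_elim2) (rule F_diff)
  then show "eventually (\<lambda>n. s n - t n - (x - y) \<in> F N) sequentially"
    by (simp add: algebra_simps)
qed

lemma flim_Suc_iff: "flim F (\<lambda>n. s (Suc n)) x \<longleftrightarrow> flim F s x"
  using eventually_sequentially_Suc[of "\<lambda>n. s n - x \<in> F _"]
  by (simp add: flim_iff_eventually)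

lemma flimI: "(\<And>n. s n - x \<in> F n) \<Longrightarrow> flim F s x"
  unfolding flim_def using F_mono by blast

lemma flim_exI_increments:
  assumes "flim F (\<lambda>n. s (Suc n) - s n) 0"
  shows "\<exists>x. flim F s x"
proof (rule complete, intro allI)
  fix N
  obtain M where M: "\<And>k. k \<ge> M \<Longrightarrow> s (Suc k) - s k \<in> F N"
    using assms by (auto simp: flim_def)
  have "s m - s n \<in> F N" if "M \<le> n" "n \<le> m" for m n
  proof -
    have "(\<Sum>k = n..<m. s (Suc k) - s k) \<in> F N"
      using M that by (intro F_sum) auto
    then show ?thesis by (simp add: sum_Suc_diff'[OF \<open>n \<le> m\<close>])
  qed
  then have "\<forall>m\<ge>M. \<forall>n\<ge>M. s m - s n \<in> F N"
    by (metis F_diff_commute nat_le_linear)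
  then show "\<exists>M. \<forall>m\<ge>M. \<forall>n\<ge>M. s m - s n \<in> F N" by blast
qed

lemma fseries_eqI: "flim F (\<lambda>n. \<Sum>k<n. t k) x \<Longrightarrow> fseries F t = x"
  unfolding fseries_def using flim_unique by blast

lemma flim_fseries:
  assumes "flim F t 0"
  shows "flim F (\<lambda>n. \<Sum>k<n. t k) (fseries F t)"
proof -
  obtain x where "flim F (\<lambda>n. \<Sum>k<n. t k) x"
    using flim_exI_increments[of "\<lambda>n. \<Sum>k<n. t k"] assms by auto
  then show ?thesis using fseries_eqI by simp
qed

lemma fseries_Suc_shift:
  assumes "flim F t 0"
  shows "fseries F t = t 0 + fseries F (\<lambda>k. t (Suc k))"
proof (rule fseries_eqI)
  have "flim F (\<lambda>n. \<Sum>k<n. t (Suc k)) (fseries F (\<lambda>k. t (Suc k)))"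
    using assms by (intro flim_fseries) (simp add: flim_Suc_iff[of t])
  then have "flim F (\<lambda>n. \<Sum>k<Suc n. t k) (t 0 + fseries F (\<lambda>k. t (Suc k)))"
    by (simp add: sum.lessThan_Suc_shift flim_def add.commute[of "t 0"] flip: sum.lessThan_Suc)
  then show "flim F (\<lambda>n. \<Sum>k<n. t k) (t 0 + fseries F (\<lambda>k. t (Suc k)))"
    by (rule flim_Suc_iff[THEN iffD1])
qed

section \<open>Maps near the identity\<close>

text \<open>For the ultrametric \<open>\<parallel>x\<parallel> = 2\<^sup>-\<^sup>n\<close>, \<open>n\<close> maximal with \<open>x \<in> F n\<close>, the two clauses say that
  \<open>g - id\<close> is quadratically small and a contraction on \<open>F 1\<close>.\<close>

definition near_identity :: "('a \<Rightarrow> 'a) \<Rightarrow> bool" where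
  "near_identity g \<longleftrightarrow>
     (\<forall>i\<ge>1. \<forall>a\<in>F i. g a - a \<in> F (2 * i)) \<and>
     (\<forall>j. \<forall>a\<in>F 1. \<forall>b\<in>F 1. a - b \<in> F j \<longrightarrow> g a - g b - (a - b) \<in> F (Suc j))"

lemma near_identityI:
  assumes "\<And>i a. 1 \<le> i \<Longrightarrow> a \<in> F i \<Longrightarrow> g a - a \<in> F (2 * i)"
    and "\<And>j a b. a \<in> F 1 \<Longrightarrow> b \<in> F 1 \<Longrightarrow> a - b \<in> F j \<Longrightarrow> g a - g b - (a - b) \<in> F (Suc j)"
  shows "near_identity g"
  using assms unfolding near_identity_def by blast

lemma near_identity_quadratic:
  "near_identity g \<Longrightarrow> 1 \<le> i \<Longrightarrow> a \<in> F i \<Longrightarrow> g a - a \<in> F (2 * i)"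
  unfolding near_identity_def by blast

lemma near_identity_contraction:
  "near_identity g \<Longrightarrow> a \<in> F 1 \<Longrightarrow> b \<in> F 1 \<Longrightarrow> a - b \<in> F j \<Longrightarrow>
    g a - g b - (a - b) \<in> F (Suc j)"
  unfolding near_identity_def by blast

lemma near_identity_in_F:
  assumes "near_identity g" "1 \<le> i" "a \<in> F i"
  shows "g a \<in> F i"
proof -
  have "g a - a \<in> F i"
    using F_mono[OF near_identity_quadratic[OF assms]] by simp
  then show ?thesis using F_add[OF _ assms(3)] by fastforce
qed

lemma near_identity_diff_in_F:
  assumes "near_identity g" "a \<in> F 1" "b \<in> F 1" "a - b \<in> F j"
  shows "g a - g b \<in> F j"
proof -
  have "g a - g b - (a - b) \<in> F j"
    using F_mono[OF near_identity_contraction[OF assms]] by simp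
  then show ?thesis using F_add[OF _ assms(4)] by fastforce
qed

lemma near_identity_cong:
  assumes g: "near_identity g" and eq: "\<And>a. a \<in> F 1 \<Longrightarrow> h a = g a"
  shows "near_identity h"
proof (rule near_identityI)
  fix i a assume i: "1 \<le> i" and a: "a \<in> F i"
  then have "h a = g a"
    using eq F_mono by blast
  then show "h a - a \<in> F (2 * i)"
    using near_identity_quadratic[OF g i a] by simp
next
  fix j a b assume "a \<in> F 1" "b \<in> F 1" "a - b \<in> F j"
  then show "h a - h b - (a - b) \<in> F (Suc j)"
    using near_identity_contraction[OF g] eq by simp
qed

lemma near_identity_comp:
  assumes g: "near_identity g" and h: "near_identity h"
  shows "near_identity (\<lambda>a. g (h a))"
proof (rule near_identityI)
  fix i a assume i: "1 \<le> i" and a: "a \<in> F i"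
  show "g (h a) - a \<in> F (2 * i)"
    using near_identity_quadratic[OF g i near_identity_in_F[OF h i a]]
      near_identity_quadratic[OF h i a] by (rule F_diff_trans)
next
  fix j a b assume a: "a \<in> F 1" and b: "b \<in> F 1" and ab: "a - b \<in> F j"
  have "h a \<in> F 1" "h b \<in> F 1"
    using near_identity_in_F[OF h] a b by auto
  then have "g (h a) - g (h b) - (h a - h b) \<in> F (Suc j)"
    using near_identity_contraction[OF g] near_identity_diff_in_F[OF h a b ab] by blast
  then show "g (h a) - g (h b) - (a - b) \<in> F (Suc j)"
    using near_identity_contraction[OF h a b ab] by (rule F_diff_trans)
qed

lemma near_identity_flim:
  assumes g: "near_identity g" and s: "\<And>n. s n \<in> F 1" and x: "x \<in> F 1"
    and lim: "flim F s x"
  shows "flim F (\<lambda>n. g (s n)) (g x)"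
  using lim near_identity_diff_in_F[OF g s x] unfolding flim_def by blast

lemma near_identity_inj_on:
  assumes g: "near_identity g"
  shows "inj_on g (F 1)"
proof (rule inj_onI)
  fix a b assume a: "a \<in> F 1" and b: "b \<in> F 1" and eq: "g a = g b"
  have "a - b \<in> F j" for j
  proof (induction j)
    case 0
    show ?case by (simp add: F_0)
  next
    case (Suc j)
    then have "g a - g b - (a - b) \<in> F (Suc j)"
      using near_identity_contraction[OF g a b] by blast
    with eq have "b - a \<in> F (Suc j)" by simp
    then show ?case by (rule F_diff_commute[THEN iffD1])
  qed
  then show "a = b" by (rule F_eqI)
qed

lemma near_identity_surj:
  assumes g: "near_identity g" and c: "c \<in> F 1"
  shows "c \<in> g ` F 1"
proof -
  define b where "b n = ((\<lambda>x. x + (c - g x)) ^^ n) c" for n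
  have b_Suc: "b (Suc n) = b n + (c - g (b n))" for n
    by (simp add: b_def)
  have b: "b n \<in> F 1 \<and> c - g (b n) \<in> F (Suc n)" for n
  proof (induction n)
    case 0
    show ?case using c F_diff[OF c near_identity_in_F[OF g _ c]] by (simp add: b_def)
  next
    case (Suc n)
    then have b1: "b (Suc n) \<in> F 1"
      unfolding b_Suc using F_mono[of "c - g (b n)" "Suc n" 1] by (simp add: F_add)
    have "b (Suc n) - b n \<in> F (Suc n)"
      using Suc by (simp add: b_Suc)
    then have "g (b (Suc n)) - g (b n) - (b (Suc n) - b n) \<in> F (Suc (Suc n))"
      using Suc b1 near_identity_contraction[OF g] by blast
    moreover have "g (b (Suc n)) - g (b n) - (b (Suc n) - b n) = g (b (Suc n)) - c"
      by (simp add: b_Suc)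
    ultimately have "c - g (b (Suc n)) \<in> F (Suc (Suc n))"
      using F_diff_commute by metis
    with b1 show ?case by (rule conjI)
  qed
  have b_close: "c - g (b n) \<in> F n" for n
    using b[of n] F_mono[of "c - g (b n)" "Suc n" n] by simp
  have "flim F (\<lambda>n. b (Suc n) - b n) 0"
    by (intro flimI) (simp add: b_Suc b_close)
  then obtain x where lim: "flim F b x"
    using flim_exI_increments[of b] by blast
  have x: "x \<in> F 1"
    by (rule flim_closed[OF lim]) (use b in blast)
  have "flim F (\<lambda>n. g (b n)) c"
    by (rule flimI, rule F_diff_commute[THEN iffD1], rule b_close)
  moreover have "flim F (\<lambda>n. g (b n)) (g x)"
    by (rule near_identity_flim[OF g _ x lim]) (use b in blast)
  ultimately have "c = g x"
    by (rule flim_unique)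
  then show ?thesis
    using x by (rule image_eqI)
qed

lemma near_identity_bij_betw:
  assumes "near_identity g"
  shows "bij_betw g (F 1) (F 1)"
proof -
  have "g ` F 1 = F 1"
    using near_identity_surj[OF assms] near_identity_in_F[OF assms, of 1] by auto
  then show ?thesis
    unfolding bij_betw_def using near_identity_inj_on[OF assms] by blast
qed

lemma near_identity_reflects_F:
  assumes g: "near_identity g" and x: "x \<in> F 1" and gx: "g x \<in> F i"
  shows "x \<in> F i"
proof -
  have "x \<in> F k" if "k \<le> i" for k
    using that
  proof (induction k)
    case 0
    show ?case by (simp add: F_0)
  next
    case (Suc k)
    show ?case
    proof (cases "k = 0")
      case True
      with x show ?thesis by simp
    next
      case False
      have "g x - x \<in> F (Suc k)"
        using F_mono[OF near_identity_quadratic[OF g _ Suc.IH]] Suc.prems False by simp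
      moreover have "g x \<in> F (Suc k)"
        using F_mono[OF gx Suc.prems] .
      ultimately show ?thesis using F_diff by fastforce
    qed
  qed
  then show ?thesis by blast
qed

lemma near_identity_the_inv_into:
  assumes g: "near_identity g" and i: "1 \<le> i" and a: "a \<in> F i"
  shows "the_inv_into (F 1) g a - a \<in> F (2 * i)"
proof -
  let ?x = "the_inv_into (F 1) g a"
  have bij: "bij_betw g (F 1) (F 1)"
    using near_identity_bij_betw[OF g] .
  have a1: "a \<in> F 1"
    using F_mono[OF a i] .
  have x: "?x \<in> F 1" and gx: "g ?x = a"
    using bij_betwE[OF bij_betw_the_inv_into[OF bij]] f_the_inv_into_f_bij_betw[OF bij] a1
    by auto
  have "g ?x - ?x \<in> F (2 * i)"
    using near_identity_quadratic[OF g i near_identity_reflects_F[OF g x]] gx a by simp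
  with gx show ?thesis using F_diff_commute by metis
qed

section \<open>Exponential and logarithm\<close>

definition powser_tail :: "(nat \<Rightarrow> 'k) \<Rightarrow> 'a \<Rightarrow> 'a" where
  "powser_tail c u = fseries F (\<lambda>k. scale (c (k + 2)) (u ^ (k + 2)))"

lemma flim_powser_tail_terms:
  assumes "u \<in> F 1"
  shows "flim F (\<lambda>k. scale (c (k + 2)) (u ^ (k + 2))) 0"
proof (rule flimI)
  fix k
  have "u ^ (k + 2) \<in> F k"
    using F_mono[OF F_power[OF assms, of "k + 2"]] by simp
  then show "scale (c (k + 2)) (u ^ (k + 2)) - 0 \<in> F k"
    by (simp add: F_scale)
qed

lemma flim_powser_tail:
  "u \<in> F 1 \<Longrightarrow> flim F (\<lambda>n. \<Sum>k<n. scale (c (k + 2)) (u ^ (k + 2))) (powser_tail c u)"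
  unfolding powser_tail_def by (rule flim_fseries[OF flim_powser_tail_terms])

lemma powser_tail_in_F:
  assumes i: "1 \<le> i" and u: "u \<in> F i"
  shows "powser_tail c u \<in> F (2 * i)"
proof (rule flim_closed[OF flim_powser_tail])
  show "u \<in> F 1"
    using F_mono[OF u i] .
  fix n
  have "u ^ (k + 2) \<in> F (2 * i)" for k
    using F_mono[OF F_power[OF u, of "k + 2"]] by simp
  then show "(\<Sum>k<n. scale (c (k + 2)) (u ^ (k + 2))) \<in> F (2 * i)"
    by (intro F_sum F_scale)
qed

lemma powser_tail_diff:
  assumes u: "u \<in> F 1" and v: "v \<in> F 1" and uv: "u - v \<in> F j"
  shows "powser_tail c u - powser_tail c v \<in> F (Suc j)"
proof (rule flim_closed[OF flim_diff[OF flim_powser_tail[OF u] flim_powser_tail[OF v]]])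
  fix n
  have "u ^ (k + 2) - v ^ (k + 2) \<in> F (Suc j)" for k
    using F_mono[OF F_power_diff[OF u v uv, of "Suc k"]] by simp
  then have "(\<Sum>k<n. scale (c (k + 2)) (u ^ (k + 2) - v ^ (k + 2))) \<in> F (Suc j)"
    by (intro F_sum F_scale)
  then show "(\<Sum>k<n. scale (c (k + 2)) (u ^ (k + 2))) - (\<Sum>k<n. scale (c (k + 2)) (v ^ (k + 2)))
      \<in> F (Suc j)"
    by (simp add: scale_diff_right sum_subtractf)
qed

lemma fseries_eq_powser_tail:
  assumes u: "u \<in> F 1" and t: "\<And>k. t (k + 2) = scale (c (k + 2)) (u ^ (k + 2))"
  shows "fseries F t = t 0 + t 1 + powser_tail c u"
proof -
  have tail: "(\<lambda>k. t (Suc (Suc k))) = (\<lambda>k. scale (c (k + 2)) (u ^ (k + 2)))"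
    using t by (simp add: numeral_2_eq_2)
  have "flim F (\<lambda>k. t (Suc (Suc k))) 0"
    unfolding tail by (rule flim_powser_tail_terms[OF u])
  then have "flim F (\<lambda>k. t (Suc k)) 0" "flim F t 0"
    by (simp_all add: flim_Suc_iff[of "\<lambda>k. t (Suc k)"] flim_Suc_iff[of t])
  then show ?thesis
    by (simp add: fseries_Suc_shift tail powser_tail_def)
qed

lemma near_identity_add_powser_tail:
  "near_identity (\<lambda>u. u + powser_tail c u)"
  "near_identity (\<lambda>u. u + powser_tail c (- u))"
proof -
  have "- a - - b \<in> F j" if "a - b \<in> F j" for a b j
    using F_uminus[OF that] by simp
  then show "near_identity (\<lambda>u. u + powser_tail c u)"
    and "near_identity (\<lambda>u. u + powser_tail c (- u))"
    by (auto intro!: near_identityI powser_tail_in_F powser_tail_diff F_uminus)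
qed

lemma fexp_eq:
  assumes "u \<in> F 1"
  shows "fexp scale F u = 1 + (u + powser_tail (\<lambda>k. 1 / fact k) u)"
  unfolding fexp_def by (subst fseries_eq_powser_tail[OF assms]) (simp_all add: scale_one)

lemma flog_eq:
  assumes "x \<in> F 1"
  shows "flog scale F (1 + x) = x + powser_tail (\<lambda>k. - (1 / of_nat k)) (- x)"
  unfolding flog_def
  by (subst fseries_eq_powser_tail[OF F_uminus[OF assms]])
    (simp_all add: scale_one scale_minus_left)

lemma near_identity_fexp: "near_identity (\<lambda>u. fexp scale F u - 1)"
  by (rule near_identity_cong[OF near_identity_add_powser_tail(1)]) (simp add: fexp_eq)

lemma near_identity_flog: "near_identity (\<lambda>x. flog scale F (1 + x))"
  by (rule near_identity_cong[OF near_identity_add_powser_tail(2)]) (simp add: flog_eq)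

section \<open>The map \<open>a \<mapsto> C(P a, a - P a)\<close>\<close>

lemma near_identity_split_mult:
  assumes g: "near_identity g" and h: "near_identity h"
    and P_add: "\<And>x y. P (x + y) = P x + P y" and P_F: "\<And>n x. x \<in> F n \<Longrightarrow> P x \<in> F n"
  shows "near_identity (\<lambda>a. g (P a) + h (a - P a) + g (P a) * h (a - P a))"
proof (rule near_identityI)
  fix i a assume i: "1 \<le> i" and a: "a \<in> F i"
  have p: "P a \<in> F i" and q: "a - P a \<in> F i"
    using P_F[OF a] F_diff[OF a] by auto
  have "g (P a) * h (a - P a) \<in> F (i + i)"
    using F_mult[OF near_identity_in_F[OF g i p] near_identity_in_F[OF h i q]] .
  then have "(g (P a) - P a) + (h (a - P a) - (a - P a)) + g (P a) * h (a - P a) \<in> F (2 * i)"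
    using near_identity_quadratic[OF g i p] near_identity_quadratic[OF h i q]
    by (intro F_add) (simp_all add: mult_2)
  then show "g (P a) + h (a - P a) + g (P a) * h (a - P a) - a \<in> F (2 * i)"
    by (simp add: algebra_simps)
next
  fix j a b assume a: "a \<in> F 1" and b: "b \<in> F 1" and ab: "a - b \<in> F j"
  let ?x = "g (P a)" and ?y = "h (a - P a)" and ?x' = "g (P b)" and ?y' = "h (b - P b)"
  have pa: "P a \<in> F 1" and pb: "P b \<in> F 1" and qa: "a - P a \<in> F 1" and qb: "b - P b \<in> F 1"
    using P_F a b F_diff by auto
  have "P (a - b) = P a - P b"
    by (metis P_add diff_add_cancel eq_diff_eq)
  then have pab: "P a - P b \<in> F j"
    using P_F[OF ab] by simp
  have qab: "(a - P a) - (b - P b) \<in> F j"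
    using F_diff[OF ab pab] by (simp add: algebra_simps)
  have "(?x - ?x') * ?y \<in> F (j + 1)"
    using F_mult[OF near_identity_diff_in_F[OF g pa pb pab] near_identity_in_F[OF h _ qa]] by simp
  moreover have "?x' * (?y - ?y') \<in> F (1 + j)"
    using F_mult[OF near_identity_in_F[OF g _ pb] near_identity_diff_in_F[OF h qa qb qab]] by simp
  ultimately have "(?x - ?x' - (P a - P b)) + (?y - ?y' - ((a - P a) - (b - P b)))
      + ((?x - ?x') * ?y + ?x' * (?y - ?y')) \<in> F (Suc j)"
    using near_identity_contraction[OF g pa pb pab] near_identity_contraction[OF h qa qb qab]
    by (intro F_add) simp_all
  then show "?x + ?y + ?x * ?y - (?x' + ?y' + ?x' * ?y') - (a - b) \<in> F (Suc j)"
    by (simp add: algebra_simps)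
qed

lemma near_identity_fC_split:
  assumes P_add: "\<And>x y. P (x + y) = P x + P y" and P_F: "\<And>n x. x \<in> F n \<Longrightarrow> P x \<in> F n"
  shows "near_identity (\<lambda>a. fC scale F (P a) (a - P a))"
proof -
  let ?e = "\<lambda>u. fexp scale F u - 1"
  have "near_identity
      (\<lambda>a. flog scale F (1 + (?e (P a) + ?e (a - P a) + ?e (P a) * ?e (a - P a))))"
    using near_identity_comp[OF near_identity_flog
        near_identity_split_mult[OF near_identity_fexp near_identity_fexp P_add P_F]] .
  moreover have "1 + (?e p + ?e q + ?e p * ?e q) = fexp scale F p * fexp scale F q" for p q
    by (simp add: algebra_simps)
  ultimately show ?thesis
    by (simp add: fC_def)
qed

end

theorem proposition2p1:
  fixes scale :: "'k::field_char_0 \<Rightarrow> 'a::ring_1 \<Rightarrow> 'a"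
    and F :: "nat \<Rightarrow> 'a set"
    and P :: "'a \<Rightarrow> 'a"
  assumes A: "complete_filtered_algebra scale F"
    and P_add: "\<And>x y. P (x + y) = P x + P y"
    and P_scale: "\<And>c x. P (scale c x) = scale c (P x)"
    and P_filt: "\<And>n. P ` F n \<subseteq> F n"
  shows "\<exists>\<chi>. \<chi> ` F 1 \<subseteq> F 1
          \<and> (\<forall>i\<ge>1. \<forall>a\<in>F i. \<chi> a - a \<in> F (2 * i))
          \<and> (\<forall>a\<in>F 1. a = fC scale F (P (\<chi> a)) (\<chi> a - P (\<chi> a)))
          \<and> (\<forall>\<psi>. (\<psi> ` F 1 \<subseteq> F 1
                   \<and> (\<forall>i\<ge>1. \<forall>a\<in>F i. \<psi> a - a \<in> F (2 * i))
                   \<and> (\<forall>a\<in>F 1. a = fC scale F (P (\<psi> a)) (\<psi> a - P (\<psi> a))))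
                 \<longrightarrow> (\<forall>a\<in>F 1. \<psi> a = \<chi> a))
          \<and> bij_betw \<chi> (F 1) (F 1)
          \<and> (\<forall>a\<in>F 1. the_inv_into (F 1) \<chi> a = fC scale F (P a) (a - P a))"
proof -
  interpret complete_filtered_algebra scale F by (rule A)
  define \<Phi> where "\<Phi> a = fC scale F (P a) (a - P a)" for a
  have \<Phi>: "near_identity \<Phi>"
    unfolding \<Phi>_def by (rule near_identity_fC_split[OF P_add]) (use P_filt in blast)
  then have bij: "bij_betw \<Phi> (F 1) (F 1)"
    by (rule near_identity_bij_betw)
  define \<chi> where "\<chi> = the_inv_into (F 1) \<Phi>"
  have \<Phi>_\<chi>: "\<Phi> (\<chi> a) = a" if "a \<in> F 1" for a
    unfolding \<chi>_def using f_the_inv_into_f_bij_betw[OF bij] that by blast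
  have \<chi>_unique: "\<psi> a = \<chi> a" if "\<psi> a \<in> F 1" "a = \<Phi> (\<psi> a)" for \<psi> a
    unfolding \<chi>_def using the_inv_into_f_f[OF bij_betw_imp_inj_on[OF bij] that(1)] that(2)
    by metis
  show ?thesis
  proof (intro exI[of _ \<chi>] conjI)
    show "bij_betw \<chi> (F 1) (F 1)"
      unfolding \<chi>_def by (rule bij_betw_the_inv_into[OF bij])
    then show "\<chi> ` F 1 \<subseteq> F 1"
      by (simp add: bij_betw_def)
    show "\<forall>i\<ge>1. \<forall>a\<in>F i. \<chi> a - a \<in> F (2 * i)"
      unfolding \<chi>_def using near_identity_the_inv_into[OF \<Phi>] by blast
  qed (use \<Phi>_\<chi> \<chi>_unique the_inv_into_the_inv_into[OF bij] in
      \<open>auto simp: \<Phi>_def \<chi>_def\<close>)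
qed

end
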